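(* For all integers $m\ge n\ge 2$, $\gamma^{DLD}(K_n\times K_m)=\gamma^{DLD}(K_n\square K_m)$.
   Context: $K_q$ is the complete graph on vertex set $\{1,\dots,q\}$. The Cartesian product $G_1\square G_2$ has vertex set $V_1\times V_2$, with $(u_1,u_2)$ adjacent to $(v_1,v_2)$ iff ($u_1=v_1$ and $u_2v_2\in E_2$) or ($u_2=v_2$ and $u_1v_1\in E_1$). The direct product $G_1\times G_2$ has vertex set $V_1\times V_2$, with $(u_1,u_2)$ adjacent to $(v_1,v_2)$ iff $u_1v_1\in E_1$ and $u_2v_2\in E_2$. For a code (nonempty vertex subset) $C$ and vertex $v$, $I(C;v)=N[v]\cap C$, where $N[v]$ is the closed neighbourhood. A code $C$ is solid-locating-dominating if for all distinct non-codewords $u,v$, $I(C;u)\setminus I(C;v)\ne\emptyset$. $\gamma^{DLD}(G)$ is the minimum size of a solid-locating-dominating code in the finite graph $G$. *)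

theory Defs
  imports Main
begin

type_synonym 'a graph = "'a set \<times> ('a \<Rightarrow> 'a \<Rightarrow> bool)"

definition verts :: "'a graph \<Rightarrow> 'a set" where "verts G = fst G"
definition adj :: "'a graph \<Rightarrow> 'a \<Rightarrow> 'a \<Rightarrow> bool" where "adj G = snd G"

definition complete_graph :: "nat \<Rightarrow> nat graph" where
  "complete_graph q = ({1..q}, \<lambda>u v. u \<in> {1..q} \<and> v \<in> {1..q} \<and> u \<noteq> v)"

definition cartesian_product :: "'a graph \<Rightarrow> 'b graph \<Rightarrow> ('a \<times> 'b) graph" where
  "cartesian_product G1 G2 = (verts G1 \<times> verts G2,
     \<lambda>(u1, u2) (v1, v2). (u1 = v1 \<and> adj G2 u2 v2) \<or> (u2 = v2 \<and> adj G1 u1 v1))"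

definition direct_product :: "'a graph \<Rightarrow> 'b graph \<Rightarrow> ('a \<times> 'b) graph" where
  "direct_product G1 G2 = (verts G1 \<times> verts G2,
     \<lambda>(u1, u2) (v1, v2). adj G1 u1 v1 \<and> adj G2 u2 v2)"

definition closed_nbhd :: "'a graph \<Rightarrow> 'a \<Rightarrow> 'a set" where
  "closed_nbhd G v = {u \<in> verts G. u = v \<or> adj G v u}"

definition I_set :: "'a graph \<Rightarrow> 'a set \<Rightarrow> 'a \<Rightarrow> 'a set" where
  "I_set G C v = closed_nbhd G v \<inter> C"

definition solid_locating_dominating :: "'a graph \<Rightarrow> 'a set \<Rightarrow> bool" where
  "solid_locating_dominating G C \<longleftrightarrow> C \<subseteq> verts G \<and> C \<noteq> {} \<and>
     (\<forall>u \<in> verts G - C. \<forall>v \<in> verts G - C. u \<noteq> v \<longrightarrow> I_set G C u - I_set G C v \<noteq> {})"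

definition gamma_DLD :: "'a graph \<Rightarrow> nat" where
  "gamma_DLD G = (LEAST k. \<exists>C. solid_locating_dominating G C \<and> card C = k)"

end

theory Submission
  imports Defs
begin

text \<open>On the vertex set \<open>{1..n} \<times> {1..m}\<close>, two distinct vertices are adjacent in
  \<open>K\<^sub>n \<times> K\<^sub>m\<close> exactly when they differ in both coordinates, and in \<open>K\<^sub>n \<box> K\<^sub>m\<close> exactly when
  they agree in one; so each graph is the complement of the other. For a graph and its complement
  and two non-codewords \<open>u\<close>, \<open>v\<close>, the codewords separating \<open>u\<close> from \<open>v\<close> in one graph are the
  codewords separating \<open>v\<close> from \<open>u\<close> in the other. Hence both graphs have the same
  solid-locating-dominating codes, and in particular the same minimum size.\<close>

definition complementary_graphs :: "'a graph \<Rightarrow> 'a graph \<Rightarrow> bool" where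
  "complementary_graphs G H \<longleftrightarrow> verts G = verts H \<and>
     (\<forall>u \<in> verts G. \<forall>w \<in> verts G. u \<noteq> w \<longrightarrow> (adj G u w \<longleftrightarrow> \<not> adj H u w))"

lemma complementary_graphs_I_set_diff:
  assumes GH: "complementary_graphs G H"
    and u: "u \<in> verts G - C" and v: "v \<in> verts G - C"
  shows "I_set G C u - I_set G C v = I_set H C v - I_set H C u"
proof (rule set_eqI)
  fix x
  show "x \<in> I_set G C u - I_set G C v \<longleftrightarrow> x \<in> I_set H C v - I_set H C u"
  proof (cases "x \<in> C \<and> x \<in> verts G")
    case True
    then have "x \<noteq> u" "x \<noteq> v"
      using u v by auto
    with True u v GH have "adj G u x \<longleftrightarrow> \<not> adj H u x" "adj G v x \<longleftrightarrow> \<not> adj H v x"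
      unfolding complementary_graphs_def by auto
    with \<open>x \<noteq> u\<close> \<open>x \<noteq> v\<close> GH show ?thesis
      unfolding complementary_graphs_def I_set_def closed_nbhd_def by auto
  next
    case False
    with GH show ?thesis
      unfolding complementary_graphs_def I_set_def closed_nbhd_def by auto
  qed
qed

lemma complementary_graphs_solid_locating_dominating_iff:
  assumes "complementary_graphs G H"
  shows "solid_locating_dominating G C \<longleftrightarrow> solid_locating_dominating H C"
proof -
  have V: "verts H = verts G"
    using assms unfolding complementary_graphs_def by simp
  have "\<forall>u \<in> verts G - C. \<forall>v \<in> verts G - C.
          I_set G C u - I_set G C v = I_set H C v - I_set H C u"
    using complementary_graphs_I_set_diff[OF assms] by blast
  then show ?thesis
    unfolding solid_locating_dominating_def V by metis
qed

lemma complementary_graphs_gamma_DLD_eq: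
  assumes "complementary_graphs G H"
  shows "gamma_DLD G = gamma_DLD H"
  unfolding gamma_DLD_def complementary_graphs_solid_locating_dominating_iff[OF assms] ..

lemma complementary_direct_cartesian_complete_graph:
  "complementary_graphs (direct_product (complete_graph n) (complete_graph m))
     (cartesian_product (complete_graph n) (complete_graph m))"
  unfolding complementary_graphs_def
  by (auto simp: verts_def adj_def direct_product_def cartesian_product_def complete_graph_def)

theorem theorem17:
  fixes n m :: nat
  assumes "2 \<le> n" and "n \<le> m"
  shows "gamma_DLD (direct_product (complete_graph n) (complete_graph m))
       = gamma_DLD (cartesian_product (complete_graph n) (complete_graph m))"
  using complementary_direct_cartesian_complete_graph
  by (rule complementary_graphs_gamma_DLD_eq)

end
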